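(* Let $n\ge4$ and let $T_n$ be the transition semigroup of a minimal DFA with $n$ states recognizing a left ideal, with $|T_n|=n^{n-1}+n-1$. Then the minimal number of generators of the semigroup $T_n$ is $5$.
   Context: A left ideal is a nonempty $L\subseteq\Sigma^*$ with $L=\Sigma^*L$. The transition semigroup of a DFA is the set of transformations of its states induced by nonempty words, a semigroup under composition. The number $n^{n-1}+n-1$ is the maximal possible size of such a transition semigroup. *)

theory Defs
  imports "HOL-Library.FuncSet"
begin

definition dfa :: "nat \<Rightarrow> 'a set \<Rightarrow> (nat \<Rightarrow> 'a \<Rightarrow> nat) \<Rightarrow> nat \<Rightarrow> nat set \<Rightarrow> bool" where
  "dfa n Sig delta q0 F \<longleftrightarrow> finite Sig \<and> 0 < n \<and> q0 < n \<and> F \<subseteq> {..<n} \<and>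
     (\<forall>q<n. \<forall>a\<in>Sig. delta q a < n)"

definition delta_star :: "(nat \<Rightarrow> 'a \<Rightarrow> nat) \<Rightarrow> nat \<Rightarrow> 'a list \<Rightarrow> nat" where
  "delta_star delta q w = foldl delta q w"

definition dfa_lang :: "'a set \<Rightarrow> (nat \<Rightarrow> 'a \<Rightarrow> nat) \<Rightarrow> nat \<Rightarrow> nat set \<Rightarrow> 'a list set" where
  "dfa_lang Sig delta q0 F = {w \<in> lists Sig. delta_star delta q0 w \<in> F}"

definition minimal_dfa :: "nat \<Rightarrow> 'a set \<Rightarrow> (nat \<Rightarrow> 'a \<Rightarrow> nat) \<Rightarrow> nat \<Rightarrow> nat set \<Rightarrow> bool" where
  "minimal_dfa n Sig delta q0 F \<longleftrightarrow> dfa n Sig delta q0 F \<and>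
     (\<forall>q<n. \<exists>w\<in>lists Sig. delta_star delta q0 w = q) \<and>
     (\<forall>p<n. \<forall>q<n. p \<noteq> q \<longrightarrow>
        (\<exists>w\<in>lists Sig. (delta_star delta p w \<in> F) \<noteq> (delta_star delta q w \<in> F)))"

definition left_ideal :: "'a set \<Rightarrow> 'a list set \<Rightarrow> bool" where
  "left_ideal Sig L \<longleftrightarrow> L \<noteq> {} \<and> L = {u @ v | u v. u \<in> lists Sig \<and> v \<in> L}"

definition trans_sg :: "nat \<Rightarrow> 'a set \<Rightarrow> (nat \<Rightarrow> 'a \<Rightarrow> nat) \<Rightarrow> (nat \<Rightarrow> nat) set" where
  "trans_sg n Sig delta =
     {restrict (\<lambda>q. delta_star delta q w) {..<n} | w. w \<in> lists Sig \<and> w \<noteq> []}"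

inductive_set sg_gen :: "'b set \<Rightarrow> ('b \<Rightarrow> 'b) set \<Rightarrow> ('b \<Rightarrow> 'b) set"
  for S :: "'b set" and G :: "('b \<Rightarrow> 'b) set" where
  base: "g \<in> G \<Longrightarrow> g \<in> sg_gen S G"
| step: "f \<in> sg_gen S G \<Longrightarrow> g \<in> sg_gen S G \<Longrightarrow> compose S f g \<in> sg_gen S G"

definition sg_rank :: "'b set \<Rightarrow> ('b \<Rightarrow> 'b) set \<Rightarrow> nat" where
  "sg_rank S T = (LEAST k. \<exists>G. G \<subseteq> T \<and> finite G \<and> card G = k \<and> sg_gen S G = T)"

end

theory Submission
  imports Defs Complex_Main "HOL-Combinatorics.Cycles"
begin

text \<open>
  Order the states of a minimal DFA by inclusion of the languages accepted from them. Every
  transformation in the transition semigroup is monotone for this order, and when the language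
  is a left ideal the initial state \<open>q0\<close> is its least element. Counting the monotone self-maps
  of a finite poset with a least element shows that as soon as two non-initial states are
  comparable there are fewer than \<open>n ^ (n - 1) + n - 1\<close> of them. So in the extremal case the
  non-initial states form an antichain, and the transition semigroup consists of all maps fixing
  \<open>q0\<close> together with the constant maps onto the other states.

  This semigroup is generated by a cycle and a transposition of the non-initial states (which
  generate their symmetric group), one merge and one reset of a single state (whose conjugates are
  all maps changing one state, and these generate all maps fixing \<open>q0\<close>), and one constant.
  Conversely, the bijections, the non-injective maps preserving the non-initial states, the maps
  fixing \<open>q0\<close> and sending another state to it, and the maps moving \<open>q0\<close> form disjoint classes,
  and whenever a composite lies in one of them so does a factor. Hence every generating set meets
  each class, and it meets the bijections twice because they do not commute.
\<close>

lemma one_add_power_ge_quadratic: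
  fixes x :: real assumes "0 \<le> x"
  shows "1 + real j * x + real j * (real j - 1) / 2 * x^2 \<le> (1 + x) ^ j"
proof (induction j)
  case 0 then show ?case by simp
next
  case (Suc j)
  have "1 + real (Suc j) * x + real (Suc j) * (real (Suc j) - 1) / 2 * x^2
      \<le> (1 + x) * (1 + real j * x + real j * (real j - 1) / 2 * x^2)"
    using assms by (cases j) (simp_all add: field_simps power2_eq_square power3_eq_cube)
  also have "\<dots> \<le> (1 + x) * (1 + x) ^ j"
    using Suc assms by (intro mult_left_mono) auto
  finally show ?case by simp
qed

lemma double_power_le_Suc_power:
  fixes m j :: nat assumes "0 < m" and "2 \<le> (1 + 1 / real m) ^ j"
  shows "2 * m ^ j \<le> (m + 1) ^ j"
proof -
  have "real (2 * m ^ j) \<le> real m ^ j * (1 + 1 / real m) ^ j"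
    using mult_left_mono[OF assms(2), of "real m ^ j"] by (simp add: mult.commute)
  also have "\<dots> = real ((m + 1) ^ j)"
    using assms(1) by (simp add: power_mult_distrib[symmetric] field_simps)
  finally show ?thesis by linarith
qed

lemma double_power_le_Suc_power_large_exp:
  fixes k j :: nat assumes "1 \<le> k" and "k \<le> j"
  shows "2 * k ^ j \<le> (k + 1) ^ j"
proof (rule double_power_le_Suc_power)
  have "2 \<le> 1 + real j * (1 / real k)" using assms by (simp add: field_simps)
  also have "\<dots> \<le> (1 + 1 / real k) ^ j"
    by (rule Bernoulli_inequality) (simp add: order.trans[of _ 0])
  finally show "2 \<le> (1 + 1 / real k) ^ j" .
qed (use assms in simp)

lemma double_power_le_Suc_power_minus_two:
  fixes m :: nat assumes "9 \<le> m"
  shows "2 * m ^ (m - 2) \<le> (m + 1) ^ (m - 2)"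
proof (rule double_power_le_Suc_power)
  define j where "j = real (m - 2)"
  have m: "real m = j + 2" and j: "7 \<le> j" using assms by (auto simp: j_def)
  have jj: "8 + 5 * j \<le> j * j" using mult_right_mono[OF j, of j] j by linarith
  have "real m ^ 2 \<le> j * real m + j * (j - 1) / 2"
    using jj unfolding m power2_eq_square by (simp add: algebra_simps)
  moreover have "1 + j * (1 / real m) + j * (j - 1) / 2 * (1 / real m)^2
      = (real m ^ 2 + j * real m + j * (j - 1) / 2) / real m ^ 2"
    using assms by (simp add: field_simps power2_eq_square)
  ultimately have "2 \<le> 1 + j * (1 / real m) + j * (j - 1) / 2 * (1 / real m)^2"
    using assms by (simp add: le_divide_eq)
  also have "\<dots> \<le> (1 + 1 / real m) ^ (m - 2)"
    using one_add_power_ge_quadratic[of "1 / real m" "m - 2"] by (simp add: j_def)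
  finally show "2 \<le> (1 + 1 / real m) ^ (m - 2)" .
qed (use assms in simp)

lemma sum_Suc_mult_power_le:
  fixes m j :: nat assumes "j \<le> m"
  shows "(\<Sum>k = 1..j. (k + 1) * k ^ (m - 1)) \<le> 2 * ((j + 1) * j ^ (m - 1))"
  using assms
proof (induction j)
  case 0 then show ?case by simp
next
  case (Suc j)
  have "2 * ((j + 1) * j ^ (m - 1)) \<le> (j + 2) * (j + 1) ^ (m - 1)"
  proof (cases "j = 0")
    case False
    then have "2 * j ^ (m - 1) \<le> (j + 1) ^ (m - 1)"
      using Suc.prems by (intro double_power_le_Suc_power_large_exp) auto
    then show ?thesis by (intro order.trans[OF _ mult_mono[of "j + 1" "j + 2"]]) auto
  qed (use Suc.prems in \<open>simp add: power_0_left\<close>)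
  then show ?case using Suc by simp
qed

text \<open>Consecutive summands at least double, so the sum is at most twice its last term; for
  \<open>n \<ge> 10\<close> this suffices, and the remaining cases are evaluated.\<close>

lemma monotone_count_inequality:
  fixes n :: nat assumes "4 \<le> n"
  shows "(n + 1) * n ^ (n - 2) + (\<Sum>k = 1..n - 1. (k + 1) * k ^ (n - 2)) < 2 * (n ^ (n - 1) + (n - 1))"
proof (cases "10 \<le> n")
  case True
  define m where "m = n - 1"
  have n: "n = m + 1" and m: "9 \<le> m" using True by (auto simp: m_def)
  have pow: "m ^ (m - 1) = m * m ^ (m - 2)" "(m + 1) ^ (m - 1) = (m + 1) * (m + 1) ^ (m - 2)"
    "(m + 1) ^ m = (m + 1) * (m + 1) ^ (m - 1)"
    using m by (simp_all flip: power_Suc add: Suc_diff_Suc numeral_2_eq_2)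
  have "(\<Sum>k = 1..m. (k + 1) * k ^ (m - 1)) \<le> 2 * ((m + 1) * m ^ (m - 1))"
    by (rule sum_Suc_mult_power_le) simp
  also have "\<dots> = (m + 1) * m * (2 * m ^ (m - 2))" unfolding pow by (simp add: algebra_simps)
  also have "\<dots> \<le> (m + 1) * m * (m + 1) ^ (m - 2)"
    using double_power_le_Suc_power_minus_two[OF m] by simp
  also have "\<dots> = m * (m + 1) ^ (m - 1)" unfolding pow by (simp add: algebra_simps)
  finally have "(\<Sum>k = 1..m. (k + 1) * k ^ (m - 1)) \<le> m * (m + 1) ^ (m - 1)" .
  moreover have "(m + 2) * (m + 1) ^ (m - 1) + m * (m + 1) ^ (m - 1) = 2 * (m + 1) ^ m"
    unfolding pow by (simp add: algebra_simps)
  ultimately show ?thesis using m by (simp add: n)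
next
  case False
  then have "n = 4 \<or> n = 5 \<or> n = 6 \<or> n = 7 \<or> n = 8 \<or> n = 9" using assms by auto
  moreover have "{1..4 - 1::nat} = {1, 2, 3}" "{1..5 - 1::nat} = {1, 2, 3, 4}"
    "{1..6 - 1::nat} = {1, 2, 3, 4, 5}" "{1..7 - 1::nat} = {1, 2, 3, 4, 5, 6}"
    "{1..8 - 1::nat} = {1, 2, 3, 4, 5, 6, 7}" "{1..9 - 1::nat} = {1, 2, 3, 4, 5, 6, 7, 8}"
    by auto
  ultimately show ?thesis by (elim disjE) simp_all
qed


section \<open>Monotone self-maps of a finite poset with a least element\<close>

text \<open>Induct by removing a minimal element: its upper set has at most \<open>card U\<close> elements, and no
  other upper set contains it.\<close>

lemma sum_card_upper_sets_le:
  fixes le :: "'b \<Rightarrow> 'b \<Rightarrow> bool" and c :: "nat \<Rightarrow> nat"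
  assumes "finite U" and "mono c" and "antisymp_on U le" and "transp_on U le"
  shows "(\<Sum>s\<in>U. c (card {p\<in>U. le s p})) \<le> (\<Sum>k = 1..card U. c k)"
  using assms(1,3,4)
proof (induction "card U" arbitrary: U)
  case 0
  then show ?case by simp
next
  case (Suc N)
  let ?lt = "\<lambda>x y. le x y \<and> x \<noteq> y"
  have "asymp_on U ?lt" using Suc.prems(2) by (auto simp: asymp_on_def dest: antisymp_onD)
  moreover have "transp_on U ?lt"
    using Suc.prems(2,3) unfolding transp_on_def by (blast dest: antisymp_onD)
  moreover have "U \<noteq> {}" using Suc.hyps(2) by auto
  ultimately obtain s0 where s0: "s0 \<in> U" and min: "\<forall>p\<in>U. p \<noteq> s0 \<longrightarrow> \<not> le p s0"
    using Finite_Set.bex_min_element[OF Suc.prems(1)] by blast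
  define U' where "U' = U - {s0}"
  have N: "N = card U'" using Suc.hyps(2) s0 Suc.prems(1) by (simp add: U'_def)
  have up: "{p\<in>U. le s p} = {p\<in>U'. le s p}" if "s \<in> U'" for s
    using that min by (auto simp: U'_def)
  have "(\<Sum>s\<in>U'. c (card {p\<in>U'. le s p})) \<le> (\<Sum>k = 1..card U'. c k)"
    by (rule Suc.hyps(1)[OF N])
      (use Suc.prems in \<open>auto simp: U'_def intro: antisymp_on_subset transp_on_subset\<close>)
  then have IH: "(\<Sum>s\<in>U'. c (card {p\<in>U'. le s p})) \<le> (\<Sum>k = 1..N. c k)" by (simp add: N)
  have "c (card {p\<in>U. le s0 p}) \<le> c (Suc N)"
    using Suc.hyps(2) Suc.prems(1) card_mono[of U "{p\<in>U. le s0 p}"]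
    by (intro monoD[OF assms(2)]) auto
  then have "(\<Sum>s\<in>U. c (card {p\<in>U. le s p})) \<le> c (Suc N) + (\<Sum>s\<in>U'. c (card {p\<in>U'. le s p}))"
    using Suc.prems(1) s0 up by (simp add: U'_def sum.remove)
  also have "\<dots> \<le> (\<Sum>k = 1..Suc N. c k)" using IH by simp
  finally show ?case using Suc.hyps(2) by simp
qed

lemma card_ordered_pairs_le:
  fixes le :: "'b \<Rightarrow> 'b \<Rightarrow> bool"
  assumes "finite A" and "antisymp_on A le"
  shows "2 * card {(x, y) \<in> A \<times> A. le x y} \<le> card A * (card A + 1)"
proof -
  define S where "S = {(x, y) \<in> A \<times> A. le x y}"
  define S' where "S' = {(x, y) \<in> A \<times> A. le y x}"
  have fin: "finite S" "finite S'"
    using assms(1) by (auto simp: S_def S'_def intro: finite_subset[of _ "A \<times> A"])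
  have "S' = (\<lambda>(x, y). (y, x)) ` S" by (auto simp: S_def S'_def)
  moreover have "inj_on (\<lambda>(x, y). (y, x)) S" by (auto simp: inj_on_def)
  ultimately have "card S' = card S" by (simp add: card_image)
  moreover have "S \<inter> S' \<subseteq> (\<lambda>x. (x, x)) ` A"
    using assms(2) by (auto simp: S_def S'_def dest: antisymp_onD)
  then have "card (S \<inter> S') \<le> card A"
    using assms(1) card_image_le[OF assms(1), of "\<lambda>x. (x, x)"]
    by (meson card_mono finite_imageI order_trans)
  moreover have "S \<union> S' \<subseteq> A \<times> A" by (auto simp: S_def S'_def)
  then have "card (S \<union> S') \<le> card A * card A"
    using assms(1) by (metis card_cartesian_product card_mono finite_cartesian_product)
  ultimately show ?thesis using card_Un_Int[OF fin] unfolding S_def by simp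
qed

lemma card_PiE_ordered_le:
  fixes le :: "'b \<Rightarrow> 'b \<Rightarrow> bool"
  assumes "finite U" and "finite A" and "q \<in> U" and "r \<in> U" and "q \<noteq> r"
  shows "card {g \<in> U \<rightarrow>\<^sub>E A. le (g q) (g r)}
    \<le> card {(x, y) \<in> A \<times> A. le x y} * card A ^ (card U - 2)"
proof -
  define P where "P = {(x, y) \<in> A \<times> A. le x y}"
  define W where "W = U - {q, r}"
  define h where "h = (\<lambda>g :: 'a \<Rightarrow> 'b. ((g q, g r), restrict g W))"
  have "inj_on h {g \<in> U \<rightarrow>\<^sub>E A. le (g q) (g r)}"
  proof (rule inj_onI)
    fix g g'
    assume "g \<in> {g \<in> U \<rightarrow>\<^sub>E A. le (g q) (g r)}" "g' \<in> {g \<in> U \<rightarrow>\<^sub>E A. le (g q) (g r)}"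
      and "h g = h g'"
    then show "g = g'"
      by (intro extensionalityI[of _ U]) (auto simp: h_def W_def fun_eq_iff PiE_def split: if_splits)
  qed
  moreover have "W \<subseteq> U" by (auto simp: W_def)
  then have "h ` {g \<in> U \<rightarrow>\<^sub>E A. le (g q) (g r)} \<subseteq> P \<times> (W \<rightarrow>\<^sub>E A)"
    using assms by (auto simp: h_def P_def)
  moreover have "finite (P \<times> (W \<rightarrow>\<^sub>E A))"
    using assms by (auto simp: P_def W_def intro!: finite_PiE intro: finite_subset[of _ "A \<times> A"])
  ultimately have "card {g \<in> U \<rightarrow>\<^sub>E A. le (g q) (g r)} \<le> card (P \<times> (W \<rightarrow>\<^sub>E A))"
    by (intro card_inj_on_le) auto
  also have "\<dots> = card P * card A ^ (card U - 2)"
    using assms by (simp add: W_def card_cartesian_product card_funcsetE card_Diff_subset numeral_2_eq_2)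
  finally show ?thesis unfolding P_def .
qed

lemma card_monotone_fibre_le:
  fixes le :: "'b \<Rightarrow> 'b \<Rightarrow> bool"
  assumes fin: "finite Q" and antisym: "antisymp_on Q le"
    and z: "z \<in> Q" and bot: "\<forall>x\<in>Q. le z x"
    and q: "q \<in> Q - {z}" and r: "r \<in> Q - {z}" and "q \<noteq> r" and "le q r" and s: "s \<in> Q"
  shows "2 * card {t \<in> Q \<rightarrow>\<^sub>E Q. monotone_on Q le le t \<and> t z = s}
    \<le> (card {p\<in>Q. le s p} + 1) * card {p\<in>Q. le s p} ^ (card Q - 2)"
proof -
  define F where "F = {t \<in> Q \<rightarrow>\<^sub>E Q. monotone_on Q le le t \<and> t z = s}"
  define A where "A = {p\<in>Q. le s p}"
  define U where "U = Q - {z}"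
  define G where "G = {g \<in> U \<rightarrow>\<^sub>E A. le (g q) (g r)}"
  have "inj_on (\<lambda>t. restrict t U) F"
  proof (rule inj_onI)
    fix t t' assume "t \<in> F" "t' \<in> F" "restrict t U = restrict t' U"
    then show "t = t'"
      by (intro extensionalityI[of _ Q]) (auto simp: F_def U_def fun_eq_iff PiE_iff split: if_splits)
  qed
  moreover have "(\<lambda>t. restrict t U) ` F \<subseteq> G"
    using z q r \<open>le q r\<close> bot by (auto simp: F_def G_def A_def U_def monotone_on_def)
  moreover have "finite G"
    using fin by (simp add: G_def U_def A_def finite_PiE)
  ultimately have "card F \<le> card G" by (rule card_inj_on_le)
  also have "\<dots> \<le> card {(x, y) \<in> A \<times> A. le x y} * card A ^ (card U - 2)"
    unfolding G_def
    by (rule card_PiE_ordered_le) (use fin q r \<open>q \<noteq> r\<close> in \<open>auto simp: U_def A_def\<close>)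
  finally have "2 * card F \<le> (2 * card {(x, y) \<in> A \<times> A. le x y}) * card A ^ (card U - 2)"
    by simp
  also have "\<dots> \<le> card A * (card A + 1) * card A ^ (card U - 2)"
    using fin antisym by (intro mult_right_mono card_ordered_pairs_le)
      (auto simp: A_def intro: antisymp_on_subset)
  moreover have "2 \<le> card U"
    using fin q r \<open>q \<noteq> r\<close> card_mono[of U "{q, r}"] by (simp add: U_def)
  then have "card Q - 2 = Suc (card U - 2)" using fin z by (simp add: U_def)
  ultimately show ?thesis by (simp add: F_def A_def algebra_simps)
qed

lemma card_monotone_maps_lt:
  fixes le :: "'b \<Rightarrow> 'b \<Rightarrow> bool"
  assumes fin: "finite Q" and n: "4 \<le> card Q"
    and antisym: "antisymp_on Q le" and trans: "transp_on Q le"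
    and z: "z \<in> Q" and bot: "\<forall>x\<in>Q. le z x"
    and "q \<in> Q - {z}" and "r \<in> Q - {z}" and "q \<noteq> r" and "le q r"
  shows "card {t \<in> Q \<rightarrow>\<^sub>E Q. monotone_on Q le le t} < card Q ^ (card Q - 1) + card Q - 1"
proof -
  define n where "n = card Q"
  define M where "M = {t \<in> Q \<rightarrow>\<^sub>E Q. monotone_on Q le le t}"
  define U where "U = Q - {z}"
  define c where "c = (\<lambda>k :: nat. (k + 1) * k ^ (n - 2))"
  have fibre: "2 * card {t \<in> M. t z = s} \<le> c (card {p\<in>Q. le s p})" if "s \<in> Q" for s
  proof -
    have "{t \<in> M. t z = s} = {t \<in> Q \<rightarrow>\<^sub>E Q. monotone_on Q le le t \<and> t z = s}"
      by (auto simp: M_def)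
    then show ?thesis
      using card_monotone_fibre_le[OF fin antisym z bot assms(7-10) that] by (simp add: c_def n_def)
  qed
  have up: "{p\<in>Q. le s p} = {p\<in>U. le s p}" if "s \<in> U" for s
    using that bot z antisym by (auto simp: U_def dest: antisymp_onD)
  have "mono c" unfolding c_def by (intro monoI mult_mono power_mono) auto
  have up_z: "{p\<in>Q. le z p} = Q" using bot by auto
  have "M = (\<Union>s\<in>Q. {t \<in> M. t z = s})" using z by (auto simp: M_def)
  then have "2 * card M \<le> 2 * (\<Sum>s\<in>Q. card {t \<in> M. t z = s})"
    using card_UN_le[OF fin, of "\<lambda>s. {t \<in> M. t z = s}"] by simp
  also have "\<dots> \<le> (\<Sum>s\<in>Q. c (card {p\<in>Q. le s p}))"
    using fibre by (simp add: sum_distrib_left sum_mono)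
  also have "\<dots> = c n + (\<Sum>s\<in>U. c (card {p\<in>U. le s p}))"
    using fin z up up_z by (simp add: U_def n_def sum.remove)
  also have "\<dots> \<le> c n + (\<Sum>k = 1..card U. c k)"
    using fin antisym trans \<open>mono c\<close> sum_card_upper_sets_le[of U c le]
    by (auto simp: U_def intro: antisymp_on_subset transp_on_subset)
  also have "\<dots> < 2 * (n ^ (n - 1) + (n - 1))"
    using monotone_count_inequality[of n] n fin z by (simp add: c_def n_def U_def)
  finally show ?thesis using n by (simp add: M_def n_def)
qed


section \<open>Maps fixing a point or constant\<close>

text \<open>For the states of a DFA and its initial state, this is the largest transition semigroup of a
  left ideal.\<close>

definition fix_or_const :: "'b set \<Rightarrow> 'b \<Rightarrow> ('b \<Rightarrow> 'b) set" where
  "fix_or_const Q z = {t \<in> Q \<rightarrow>\<^sub>E Q. t z = z} \<union> (\<lambda>c. restrict (\<lambda>_. c) Q) ` (Q - {z})"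

lemma fix_or_const_fixing: "t \<in> Q \<rightarrow>\<^sub>E Q \<Longrightarrow> t z = z \<Longrightarrow> t \<in> fix_or_const Q z"
  by (simp add: fix_or_const_def)

lemma fix_or_const_constI: "c \<in> Q - {z} \<Longrightarrow> restrict (\<lambda>_. c) Q \<in> fix_or_const Q z"
  by (simp add: fix_or_const_def)

lemma fix_or_const_funcset: "z \<in> Q \<Longrightarrow> fix_or_const Q z \<subseteq> Q \<rightarrow>\<^sub>E Q"
  by (auto simp: fix_or_const_def)

lemma fix_or_const_constant:
  assumes "t \<in> fix_or_const Q z" and "t z \<noteq> z" and "z \<in> Q"
  shows "t = restrict (\<lambda>_. t z) Q" and "t z \<in> Q - {z}"
proof -
  obtain c where "c \<in> Q - {z}" and "t = restrict (\<lambda>_. c) Q"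
    using assms(1,2) by (auto simp: fix_or_const_def)
  then show "t = restrict (\<lambda>_. t z) Q" and "t z \<in> Q - {z}" using assms(3) by simp_all
qed

lemma fix_or_const_constant_apply:
  assumes "t \<in> fix_or_const Q z" and "t z \<noteq> z" and "z \<in> Q" and "q \<in> Q"
  shows "t q = t z"
  using fix_or_const_constant(1)[OF assms(1-3)] assms(4) by (metis restrict_apply')

lemma card_fixing_maps:
  assumes "finite Q" and "z \<in> Q"
  shows "card {t \<in> Q \<rightarrow>\<^sub>E Q. t z = z} = card Q ^ (card Q - 1)"
proof -
  let ?A = "PiE Q (\<lambda>x. if x = z then {z} else Q)"
  have "?A = {t \<in> Q \<rightarrow>\<^sub>E Q. t z = z}"
  proof (intro equalityI subsetI)
    fix t assume t: "t \<in> ?A"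
    have "t z \<in> {z}" using PiE_mem[OF t assms(2)] by simp
    moreover have "?A \<subseteq> Q \<rightarrow>\<^sub>E Q" by (rule PiE_mono) auto
    ultimately show "t \<in> {t \<in> Q \<rightarrow>\<^sub>E Q. t z = z}" using t by auto
  qed (auto simp: PiE_iff)
  moreover have "card ?A = (\<Prod>x\<in>Q. if x = z then 1 else card Q)"
    using assms(1) by (auto simp: card_PiE intro!: prod.cong)
  ultimately show ?thesis using assms by (simp add: prod.remove)
qed

lemma card_fix_or_const:
  assumes "finite Q" and "z \<in> Q"
  shows "card (fix_or_const Q z) = card Q ^ (card Q - 1) + card Q - 1"
proof -
  let ?A = "{t \<in> Q \<rightarrow>\<^sub>E Q. t z = z}" and ?B = "(\<lambda>c. restrict (\<lambda>_. c) Q) ` (Q - {z})"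
  have "?A \<inter> ?B = {}" using assms(2) by auto
  moreover have "finite ?A" using assms(1) by (simp add: finite_PiE)
  moreover have "finite ?B" using assms(1) by simp
  ultimately have "card (fix_or_const Q z) = card ?A + card ?B"
    unfolding fix_or_const_def by (rule card_Un_disjoint[rotated 2])
  moreover have "inj_on (\<lambda>c. restrict (\<lambda>_. c) Q) (Q - {z})"
    by (intro inj_onI) (metis assms(2) restrict_apply')
  then have "card ?B = card Q - 1" using assms by (simp add: card_image)
  moreover have "card Q \<noteq> 0" using assms by auto
  ultimately show ?thesis using card_fixing_maps[OF assms] by simp
qed

lemma fix_or_const_compose:
  assumes z: "z \<in> Q" and f: "f \<in> fix_or_const Q z" and g: "g \<in> fix_or_const Q z"
  shows "compose Q f g \<in> fix_or_const Q z"
proof -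
  have fg: "compose Q f g \<in> Q \<rightarrow>\<^sub>E Q"
    using f g fix_or_const_funcset[OF z] by (auto simp: compose_def PiE_iff)
  show ?thesis
  proof (cases "compose Q f g z = z")
    case True
    show ?thesis using fg True by (rule fix_or_const_fixing)
  next
    case False
    have "compose Q f g q = compose Q f g z" if q: "q \<in> Q" for q
    proof (cases "g z = z")
      case True
      then have "f z \<noteq> z" using False z by (simp add: compose_eq)
      moreover have "g q \<in> Q" using g q fix_or_const_funcset[OF z] by auto
      ultimately have "f (g q) = f z" by (rule fix_or_const_constant_apply[OF f _ z])
      then show ?thesis using True q z by (simp add: compose_eq)
    next
      case False
      then have "g q = g z" by (rule fix_or_const_constant_apply[OF g _ z q])
      then show ?thesis using q z by (simp add: compose_eq)
    qed
    then have "compose Q f g = restrict (\<lambda>_. compose Q f g z) Q"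
      using fg by (intro extensionalityI[of _ Q]) (auto simp: PiE_def)
    moreover have "compose Q f g z \<in> Q - {z}" using fg z False by auto
    ultimately show ?thesis by (metis fix_or_const_constI)
  qed
qed

lemma monotone_maps_subset_fix_or_const:
  fixes le :: "'b \<Rightarrow> 'b \<Rightarrow> bool"
  assumes antisym: "antisymp_on Q le" and z: "z \<in> Q" and bot: "\<forall>x\<in>Q. le z x"
    and antichain: "\<forall>q\<in>Q - {z}. \<forall>r\<in>Q - {z}. le q r \<longrightarrow> q = r"
  shows "{t \<in> Q \<rightarrow>\<^sub>E Q. monotone_on Q le le t} \<subseteq> fix_or_const Q z"
proof
  fix t assume "t \<in> {t \<in> Q \<rightarrow>\<^sub>E Q. monotone_on Q le le t}"
  then have t: "t \<in> Q \<rightarrow>\<^sub>E Q" and mono: "monotone_on Q le le t" by auto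
  show "t \<in> fix_or_const Q z"
  proof (cases "t z = z")
    case False
    have tz: "t z \<in> Q - {z}" using t z False by auto
    have "t p = t z" if p: "p \<in> Q" for p
    proof -
      have le: "le (t z) (t p)" using mono z p bot by (auto simp: monotone_on_def)
      moreover have "t p \<noteq> z"
        using le bot antisym z tz by (auto dest: antisymp_onD)
      then have "t p \<in> Q - {z}" using t p by auto
      ultimately show "t p = t z" using antichain tz by metis
    qed
    then have "t = restrict (\<lambda>_. t z) Q"
      using t by (intro extensionalityI[of _ Q]) (auto simp: PiE_def)
    then show ?thesis using tz by (auto simp: fix_or_const_def)
  qed (use t in \<open>simp add: fix_or_const_def\<close>)
qed


section \<open>Transition semigroups of left ideals\<close>

lemma delta_star_append: "delta_star delta q (u @ v) = delta_star delta (delta_star delta q u) v"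
  by (simp add: delta_star_def)

lemma delta_star_less:
  assumes "dfa n Sig delta q0 F" and "p < n" and "w \<in> lists Sig"
  shows "delta_star delta p w < n"
  using assms(2,3) by (induction w arbitrary: p) (use assms(1) in \<open>auto simp: delta_star_def dfa_def\<close>)

definition accepted_from :: "'a set \<Rightarrow> (nat \<Rightarrow> 'a \<Rightarrow> nat) \<Rightarrow> nat set \<Rightarrow> nat \<Rightarrow> 'a list set" where
  "accepted_from Sig delta F p = {w \<in> lists Sig. delta_star delta p w \<in> F}"

lemma trans_sg_PiE:
  assumes "dfa n Sig delta q0 F" and "t \<in> trans_sg n Sig delta"
  shows "t \<in> {..<n} \<rightarrow>\<^sub>E {..<n}"
proof -
  obtain w where w: "w \<in> lists Sig" and t: "t = restrict (\<lambda>q. delta_star delta q w) {..<n}"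
    using assms(2) by (auto simp: trans_sg_def)
  show ?thesis using delta_star_less[OF assms(1) _ w] by (simp add: t)
qed

lemma trans_sg_accepted_from_mono:
  assumes "t \<in> trans_sg n Sig delta" and "p < n" and "p' < n"
    and "accepted_from Sig delta F p \<subseteq> accepted_from Sig delta F p'"
  shows "accepted_from Sig delta F (t p) \<subseteq> accepted_from Sig delta F (t p')"
proof -
  obtain w where w: "w \<in> lists Sig" and t: "t = restrict (\<lambda>q. delta_star delta q w) {..<n}"
    using assms(1) by (auto simp: trans_sg_def)
  show ?thesis
  proof
    fix v assume "v \<in> accepted_from Sig delta F (t p)"
    then have "w @ v \<in> accepted_from Sig delta F p"
      using w assms(2) by (simp add: accepted_from_def t delta_star_append)
    then have "w @ v \<in> accepted_from Sig delta F p'" using assms(4) by blast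
    then show "v \<in> accepted_from Sig delta F (t p')"
      using assms(3) by (simp add: accepted_from_def t delta_star_append)
  qed
qed

lemma minimal_dfa_accepted_from_inj:
  assumes "minimal_dfa n Sig delta q0 F" and "p < n" and "q < n"
    and "accepted_from Sig delta F p = accepted_from Sig delta F q"
  shows "p = q"
  using assms unfolding minimal_dfa_def accepted_from_def by blast

lemma left_ideal_accepted_from_initial_least:
  assumes "minimal_dfa n Sig delta q0 F" and "left_ideal Sig (dfa_lang Sig delta q0 F)" and "p < n"
  shows "accepted_from Sig delta F q0 \<subseteq> accepted_from Sig delta F p"
proof
  obtain u where u: "u \<in> lists Sig" "delta_star delta q0 u = p"
    using assms(1,3) by (auto simp: minimal_dfa_def)
  fix v assume "v \<in> accepted_from Sig delta F q0"
  then have "v \<in> lists Sig" and "v \<in> dfa_lang Sig delta q0 F"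
    by (simp_all add: accepted_from_def dfa_lang_def)
  moreover from this(2) have "u @ v \<in> dfa_lang Sig delta q0 F"
    using assms(2) u(1) unfolding left_ideal_def by blast
  ultimately show "v \<in> accepted_from Sig delta F p"
    using u by (simp add: accepted_from_def dfa_lang_def delta_star_append)
qed

lemma trans_sg_eq_fix_or_const:
  assumes n: "4 \<le> n" and min: "minimal_dfa n Sig delta q0 F"
    and li: "left_ideal Sig (dfa_lang Sig delta q0 F)"
    and card: "card (trans_sg n Sig delta) = n ^ (n - 1) + n - 1"
  shows "trans_sg n Sig delta = fix_or_const {..<n} q0"
proof -
  define le where "le = (\<lambda>p p'. accepted_from Sig delta F p \<subseteq> accepted_from Sig delta F p')"
  define M where "M = {t \<in> {..<n} \<rightarrow>\<^sub>E {..<n}. monotone_on {..<n} le le t}"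
  have dfa: "dfa n Sig delta q0 F" and q0: "q0 \<in> {..<n}" using min by (auto simp: minimal_dfa_def dfa_def)
  have antisym: "antisymp_on {..<n} le"
    using minimal_dfa_accepted_from_inj[OF min] by (auto simp: antisymp_on_def le_def)
  have trans: "transp_on {..<n} le" by (auto simp: transp_on_def le_def)
  have bot: "\<forall>p\<in>{..<n}. le q0 p"
    using left_ideal_accepted_from_initial_least[OF min li] by (simp add: le_def)
  have TM: "trans_sg n Sig delta \<subseteq> M"
  proof
    fix t assume t: "t \<in> trans_sg n Sig delta"
    show "t \<in> M"
      using trans_sg_PiE[OF dfa t] trans_sg_accepted_from_mono[OF t]
      by (simp add: M_def le_def monotone_on_def)
  qed
  have "finite M" by (simp add: M_def finite_PiE)
  have antichain: "\<forall>q\<in>{..<n} - {q0}. \<forall>r\<in>{..<n} - {q0}. le q r \<longrightarrow> q = r"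
  proof (intro ballI impI, rule ccontr)
    fix q r assume "q \<in> {..<n} - {q0}" "r \<in> {..<n} - {q0}" "le q r" "q \<noteq> r"
    then have "card M < n ^ (n - 1) + n - 1"
      using card_monotone_maps_lt[OF _ _ antisym trans q0 bot] n by (simp add: M_def)
    moreover have "card (trans_sg n Sig delta) \<le> card M" using TM \<open>finite M\<close> by (rule card_mono[rotated])
    ultimately show False using card by simp
  qed
  have "trans_sg n Sig delta \<subseteq> fix_or_const {..<n} q0"
    using TM monotone_maps_subset_fix_or_const[OF antisym q0 bot antichain] by (auto simp: M_def)
  moreover have "card (trans_sg n Sig delta) = card (fix_or_const {..<n} q0)"
    using card card_fix_or_const[of "{..<n}" q0] q0 by simp
  moreover have "finite (fix_or_const {..<n} q0)" by (simp add: fix_or_const_def finite_PiE)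
  ultimately show ?thesis by (intro card_subset_eq) simp_all
qed


section \<open>Generated subsemigroups\<close>

lemma sg_gen_subset:
  assumes "G \<subseteq> A" and "\<And>f g. f \<in> A \<Longrightarrow> g \<in> A \<Longrightarrow> compose S f g \<in> A"
  shows "sg_gen S G \<subseteq> A"
proof
  fix x assume "x \<in> sg_gen S G"
  then show "x \<in> A" by induction (use assms in auto)
qed

lemma sg_gen_funcset: "G \<subseteq> S \<rightarrow> S \<Longrightarrow> sg_gen S G \<subseteq> S \<rightarrow> S"
  by (rule sg_gen_subset) (auto simp: compose_eq)

lemma sg_gen_fix_or_const:
  "z \<in> Q \<Longrightarrow> G \<subseteq> fix_or_const Q z \<Longrightarrow> sg_gen Q G \<subseteq> fix_or_const Q z"
  by (rule sg_gen_subset) (auto intro: fix_or_const_compose)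

lemma sg_gen_generator_with:
  assumes "sg_gen S G \<subseteq> T" and "x \<in> sg_gen S G" and "P x"
    and prime: "\<And>f g. f \<in> T \<Longrightarrow> g \<in> T \<Longrightarrow> P (compose S f g) \<Longrightarrow> P f \<or> P g"
  shows "\<exists>g\<in>G. P g"
  using assms(2,3)
proof induction
  case (step f g)
  then show ?case using prime[of f g] assms(1) by blast
qed blast

lemma sg_gen_singleton_commute:
  fixes S :: "'b set"
  assumes p: "p \<in> S \<rightarrow> S" and x: "x \<in> sg_gen S {p}" and y: "y \<in> sg_gen S {p}"
  shows "compose S x y = compose S y x"
proof -
  have funcset: "w \<in> S \<rightarrow> S" if "w \<in> sg_gen S {p}" for w
    using sg_gen_funcset[of "{p}" S] p that by blast
  have assoc: "compose S a (compose S b c) = compose S (compose S a b) c"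
    if "b \<in> sg_gen S {p}" "c \<in> sg_gen S {p}" for a b c :: "'b \<Rightarrow> 'b"
    using compose_assoc[OF funcset[OF that(2)], of a b] by simp
  have commute_with: "compose S w v = compose S v w"
    if v: "v \<in> sg_gen S {p}" and hyp: "compose S p v = compose S v p" and w: "w \<in> sg_gen S {p}" for v w
    using w
  proof induction
    case (base g) then show ?case using hyp by simp
  next
    case (step f g)
    have "compose S (compose S f g) v = compose S f (compose S v g)"
      using assoc[OF step.hyps(2) v, of f] step.IH(2) by simp
    also have "\<dots> = compose S (compose S v f) g"
      using assoc[OF v step.hyps(2), of f] step.IH(1) by simp
    also have "\<dots> = compose S v (compose S f g)"
      using assoc[OF step.hyps(1,2), of v] by simp
    finally show ?case .
  qed
  have "compose S p y = compose S y p"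
    using commute_with[OF sg_gen.base[of p "{p}"] _ y] by simp
  then show ?thesis using commute_with[OF y _ x] by simp
qed

lemma sg_gen_noncommutative_card_ge:
  assumes "finite B" and "B \<subseteq> S \<rightarrow> S" and "x \<in> sg_gen S B" and "y \<in> sg_gen S B"
    and "compose S x y \<noteq> compose S y x"
  shows "2 \<le> card B"
proof (rule ccontr)
  assume "\<not> 2 \<le> card B"
  then have "card B = 0 \<or> card B = 1" by auto
  then show False
  proof
    assume "card B = 0"
    then have "B = {}" using assms(1) by simp
    moreover have "sg_gen S {} = {}" using sg_gen_subset[of "{}" "{}" S] by blast
    ultimately show False using assms(3) by simp
  next
    assume "card B = 1"
    then obtain p where "B = {p}" by (rule card_1_singletonE)
    then show False using sg_gen_singleton_commute[of p S x y] assms(2-5) by auto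
  qed
qed

lemma bij_betw_compose_factors:
  assumes "finite S" and f: "f \<in> S \<rightarrow> S" and g: "g \<in> S \<rightarrow> S"
    and bij: "bij_betw (compose S f g) S S"
  shows "bij_betw f S S" and "bij_betw g S S"
proof -
  have "bij_betw (f \<circ> g) S S" using bij by (rule bij_betw_cong[THEN iffD1, rotated]) (simp add: compose_eq)
  then have inj_g: "inj_on g S" and fg: "f ` g ` S = S"
    by (auto simp: bij_betw_def image_comp dest: inj_on_imageI2)
  have "g ` S = S" using inj_g g assms(1) by (intro card_subset_eq) (auto simp: card_image)
  then show "bij_betw g S S" using inj_g by (simp add: bij_betw_def)
  then show "bij_betw f S S" using fg assms(1) by (simp add: bij_betw_def eq_card_imp_inj_on)
qed

lemma sg_gen_bij_betw:
  assumes "finite S" and "G \<subseteq> S \<rightarrow> S" and "x \<in> sg_gen S G" and "bij_betw x S S"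
  shows "x \<in> sg_gen S {g\<in>G. bij_betw g S S}"
  using assms(3,4)
proof induction
  case (base g) then show ?case by (auto intro: sg_gen.base)
next
  case (step f g)
  have "f \<in> S \<rightarrow> S" "g \<in> S \<rightarrow> S" using sg_gen_funcset[OF assms(2)] step.hyps by auto
  then show ?case
    using bij_betw_compose_factors[OF assms(1)] step by (blast intro: sg_gen.step)
qed


section \<open>At least five generators\<close>

definition collapsing :: "'b set \<Rightarrow> 'b \<Rightarrow> ('b \<Rightarrow> 'b) \<Rightarrow> bool" where
  "collapsing Q z t \<longleftrightarrow> t z = z \<and> t ` (Q - {z}) \<subseteq> Q - {z} \<and> \<not> inj_on t Q"

definition resetting :: "'b set \<Rightarrow> 'b \<Rightarrow> ('b \<Rightarrow> 'b) \<Rightarrow> bool" where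
  "resetting Q z t \<longleftrightarrow> t z = z \<and> (\<exists>u\<in>Q - {z}. t u = z)"

lemma resetting_compose:
  assumes z: "z \<in> Q" and f: "f \<in> fix_or_const Q z" and g: "g \<in> fix_or_const Q z"
    and fg: "resetting Q z (compose Q f g)"
  shows "resetting Q z f \<or> resetting Q z g"
proof -
  have fgz: "f (g z) = z" and u: "\<exists>u\<in>Q - {z}. f (g u) = z"
    using fg z by (auto simp: resetting_def compose_eq)
  show ?thesis
  proof (cases "g z = z")
    case False
    then have "g z \<in> Q - {z}" using fix_or_const_constant(2)[OF g _ z] by simp
    moreover have "f z = z"
    proof (rule ccontr)
      assume "f z \<noteq> z"
      then have "f (g z) = f z" using fix_or_const_constant_apply[OF f _ z] \<open>g z \<in> Q - {z}\<close> by blast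
      then show False using fgz \<open>f z \<noteq> z\<close> by simp
    qed
    ultimately show ?thesis using fgz by (auto simp: resetting_def)
  next
    case True
    then have "f z = z" using fgz by simp
    moreover from u obtain u where "u \<in> Q - {z}" "f (g u) = z" by blast
    moreover have "g u \<in> Q" using g \<open>u \<in> Q - {z}\<close> fix_or_const_funcset[OF z] by auto
    ultimately show ?thesis using True by (cases "g u = z") (auto simp: resetting_def)
  qed
qed

lemma collapsing_compose:
  assumes fin: "finite Q" and z: "z \<in> Q" and U: "Q - {z} \<noteq> {}"
    and f: "f \<in> fix_or_const Q z" and g: "g \<in> fix_or_const Q z"
    and fg: "collapsing Q z (compose Q f g)"
  shows "collapsing Q z f \<or> collapsing Q z g"
proof -
  have gQ: "g \<in> Q \<rightarrow> Q" using g fix_or_const_funcset[OF z] by auto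
  have fgz: "f (g z) = z" and fgU: "\<And>u. u \<in> Q - {z} \<Longrightarrow> f (g u) \<in> Q - {z}"
    and not_inj: "\<not> inj_on (compose Q f g) Q"
    using fg z by (auto simp: collapsing_def compose_eq)
  have gz: "g z = z"
  proof (rule ccontr)
    assume "g z \<noteq> z"
    moreover obtain u where "u \<in> Q - {z}" using U by blast
    ultimately show False using fgz fgU[of u] fix_or_const_constant_apply[OF g _ z, of u] by auto
  qed
  have gU: "g ` (Q - {z}) \<subseteq> Q - {z}" using gQ fgU fgz gz by fastforce
  show ?thesis
  proof (cases "inj_on g Q")
    case False
    then show ?thesis using gz gU by (simp add: collapsing_def)
  next
    case True
    then have "g ` (Q - {z}) = Q - {z}"
      using gU fin by (intro card_subset_eq) (auto simp: card_image inj_on_subset)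
    then have "f ` (Q - {z}) = (\<lambda>u. f (g u)) ` (Q - {z})" by (metis image_image)
    then have "f ` (Q - {z}) \<subseteq> Q - {z}" using fgU by auto
    moreover have "\<not> inj_on f Q"
    proof
      assume "inj_on f Q"
      then have "inj_on (compose Q f g) Q"
        using True gQ by (auto simp: inj_on_def compose_eq Pi_iff)
      then show False using not_inj by simp
    qed
    ultimately show ?thesis using fgz gz by (simp add: collapsing_def)
  qed
qed

lemma three_distinct_elements:
  assumes "3 \<le> card A"
  obtains a b c where "a \<in> A" "b \<in> A" "c \<in> A" "a \<noteq> b" "b \<noteq> c" "a \<noteq> c"
proof -
  obtain V where "V \<subseteq> A" "card V = 3" using obtain_subset_with_card_n[OF assms] by metis
  then show thesis using that by (auto simp: card_3_iff)
qed

lemma bijective_generators_card_ge: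
  assumes fin: "finite Q" and z: "z \<in> Q" and card: "3 \<le> card (Q - {z})"
    and G: "G \<subseteq> fix_or_const Q z" and "finite G" and gen: "sg_gen Q G = fix_or_const Q z"
  shows "2 \<le> card {g\<in>G. bij_betw g Q Q}"
proof -
  obtain u1 u2 u3 where u: "u1 \<in> Q - {z}" "u2 \<in> Q - {z}" "u3 \<in> Q - {z}"
    and d: "u1 \<noteq> u2" "u2 \<noteq> u3" "u1 \<noteq> u3"
    using three_distinct_elements[OF card] by blast
  have GQ: "G \<subseteq> Q \<rightarrow> Q" using G fix_or_const_funcset[OF z] by blast
  define t1 where "t1 = restrict (transpose u1 u2) Q"
  define t2 where "t2 = restrict (transpose u2 u3) Q"
  have "t1 \<in> fix_or_const Q z" "t2 \<in> fix_or_const Q z"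
    using u z by (auto simp: t1_def t2_def transpose_def intro!: fix_or_const_fixing)
  moreover have "bij_betw t1 Q Q" "bij_betw t2 Q Q"
    using u by (simp_all add: t1_def t2_def)
  ultimately have "t1 \<in> sg_gen Q {g\<in>G. bij_betw g Q Q}" "t2 \<in> sg_gen Q {g\<in>G. bij_betw g Q Q}"
    using sg_gen_bij_betw[OF fin GQ] gen by auto
  moreover have "compose Q t1 t2 u3 \<noteq> compose Q t2 t1 u3"
    using u d by (simp add: t1_def t2_def compose_eq transpose_def)
  ultimately show ?thesis
    using GQ \<open>finite G\<close> by (intro sg_gen_noncommutative_card_ge[of _ Q t1 t2]) auto
qed

lemma collapsing_generator:
  assumes fin: "finite Q" and z: "z \<in> Q" and u: "u1 \<in> Q - {z}" "u2 \<in> Q - {z}" "u1 \<noteq> u2"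
    and gen: "sg_gen Q G = fix_or_const Q z"
  shows "\<exists>g\<in>G. collapsing Q z g"
proof -
  let ?x = "restrict (\<lambda>x. if x = u1 then u2 else x) Q"
  have "?x \<in> fix_or_const Q z" using u z by (intro fix_or_const_fixing) auto
  moreover have "?x u1 = ?x u2" using u by simp
  then have "\<not> inj_on ?x Q" using u by (meson DiffD1 inj_onD)
  then have "collapsing Q z ?x" using u z by (auto simp: collapsing_def)
  ultimately show ?thesis
    using sg_gen_generator_with[of Q G "fix_or_const Q z" ?x] collapsing_compose[OF fin z] u gen
    by blast
qed

lemma resetting_generator:
  assumes z: "z \<in> Q" and u: "u \<in> Q - {z}" and gen: "sg_gen Q G = fix_or_const Q z"
  shows "\<exists>g\<in>G. resetting Q z g"
proof -
  let ?x = "restrict (\<lambda>x. if x = u then z else x) Q"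
  have "?x \<in> fix_or_const Q z" using u z by (intro fix_or_const_fixing) auto
  moreover have "resetting Q z ?x" using u z by (auto simp: resetting_def)
  ultimately show ?thesis
    using sg_gen_generator_with[of Q G "fix_or_const Q z" ?x] resetting_compose[OF z] gen by blast
qed

lemma moving_generator:
  assumes z: "z \<in> Q" and u: "u \<in> Q - {z}" and gen: "sg_gen Q G = fix_or_const Q z"
  shows "\<exists>g\<in>G. g z \<noteq> z"
proof -
  have "restrict (\<lambda>_. u) Q \<in> fix_or_const Q z" using u by (rule fix_or_const_constI)
  moreover have "compose Q f g z \<noteq> z \<Longrightarrow> f z \<noteq> z \<or> g z \<noteq> z" for f g :: "'a \<Rightarrow> 'a"
    using z by (auto simp: compose_eq)
  ultimately show ?thesis
    using sg_gen_generator_with[of Q G "fix_or_const Q z" "restrict (\<lambda>_. u) Q" "\<lambda>t. t z \<noteq> z"]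
      u z gen by auto
qed

lemma card_generators_fix_or_const_ge:
  assumes fin: "finite Q" and z: "z \<in> Q" and card: "4 \<le> card Q"
    and G: "G \<subseteq> fix_or_const Q z" and "finite G" and gen: "sg_gen Q G = fix_or_const Q z"
  shows "5 \<le> card G"
proof -
  have "3 \<le> card (Q - {z})" using fin z card by simp
  then obtain u1 u2 where u: "u1 \<in> Q - {z}" "u2 \<in> Q - {z}" "u1 \<noteq> u2"
    by (rule three_distinct_elements)
  define B where "B = {g\<in>G. bij_betw g Q Q}"
  have "2 \<le> card B"
    unfolding B_def by (rule bijective_generators_card_ge) fact+
  obtain g3 g4 g5 where g: "g3 \<in> G" "g4 \<in> G" "g5 \<in> G"
    and g3: "collapsing Q z g3" and g4: "resetting Q z g4" and g5: "g5 z \<noteq> z"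
    using collapsing_generator[OF fin z u gen] resetting_generator[OF z u(1) gen]
      moving_generator[OF z u(1) gen] by blast
  have "g5 u1 = g5 z"
    using G g g5 z u(1) by (intro fix_or_const_constant_apply[of g5 Q z]) auto
  then have "\<not> inj_on g5 Q" using u(1) z by (auto dest: inj_onD)
  moreover have "\<not> inj_on g4 Q" using g4 z by (auto simp: resetting_def inj_on_def)
  ultimately have "g3 \<notin> B" "g4 \<notin> B" "g5 \<notin> B" "g3 \<noteq> g4" "g3 \<noteq> g5" "g4 \<noteq> g5"
    using g3 g4 g5 by (auto simp: B_def bij_betw_def collapsing_def resetting_def)
  moreover have "insert g3 (insert g4 (insert g5 B)) \<subseteq> G" using g by (auto simp: B_def)
  then have "card (insert g3 (insert g4 (insert g5 B))) \<le> card G"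
    using \<open>finite G\<close> by (rule card_mono[rotated])
  moreover have "finite B" using \<open>finite G\<close> by (simp add: B_def)
  ultimately show ?thesis using \<open>2 \<le> card B\<close> by simp
qed


section \<open>Five generators suffice\<close>

lemma transpose_conj:
  assumes "bij p"
  shows "p \<circ> transpose a b \<circ> inv p = transpose (p a) (p b)"
proof -
  have "transpose (p a) (p b) \<circ> p = p \<circ> transpose a b"
    using transpose_comp_eq[OF assms, of "p a" "p b"] assms by (simp add: bij_is_inj)
  then show ?thesis using assms by (metis bij_is_surj comp_assoc comp_id surj_iff)
qed

lemma restrict_comp_eq_compose:
  assumes "g \<in> Q \<rightarrow> Q"
  shows "restrict (f \<circ> g) Q = compose Q (restrict f Q) (restrict g Q)"
  using assms by (auto simp: fun_eq_iff compose_def)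

lemma permutes_two_points:
  assumes "a \<in> A" "b \<in> A" "a' \<in> A" "b' \<in> A" "a \<noteq> b" "a' \<noteq> b'"
  obtains p where "p permutes A" "p a = a'" "p b = b'"
proof
  define c where "c = transpose a a' b'"
  show "(transpose a a' \<circ> transpose b c) permutes A"
    using assms by (auto simp: c_def transpose_def intro!: permutes_compose permutes_swap_id)
  have "c \<noteq> a" using assms by (auto simp: c_def transpose_def)
  then show "(transpose a a' \<circ> transpose b c) a = a'" using assms(5) by simp
  show "(transpose a a' \<circ> transpose b c) b = b'" by (simp add: c_def)
qed

lemma fixing_map_decompose:
  assumes fin: "finite Q" and z: "z \<in> Q" and f: "f \<in> Q \<rightarrow>\<^sub>E Q" and fz: "f z = z"
    and not_inj: "\<not> inj_on f Q"
  obtains g w a where "g \<in> Q \<rightarrow>\<^sub>E Q" "g z = z" "card (f ` Q) < card (g ` Q)"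
    and "w \<in> Q - {z}" "a \<in> Q" "w \<noteq> f a"
    and "f = compose Q (restrict (\<lambda>x. if x = w then f a else x) Q) g"
proof -
  obtain a a' where a: "a \<in> Q - {z}" "a' \<in> Q" "a' \<noteq> a" "f a' = f a"
    using not_inj unfolding inj_on_def by (metis DiffI singletonD)
  have "f ` Q \<noteq> Q" using not_inj fin by (metis eq_card_imp_inj_on)
  then obtain w where w: "w \<in> Q" "w \<notin> f ` Q" using f by blast
  have "w \<noteq> z" using w fz z by (metis image_eqI)
  define g where "g = restrict (\<lambda>x. if x = a then w else f x) Q"
  \<comment> \<open>redirecting \<open>a\<close> to the missed value \<open>w\<close> loses no value, as \<open>a'\<close> still takes \<open>f a\<close>\<close>
  have "g ` Q = insert w (f ` Q)"
  proof
    show "g ` Q \<subseteq> insert w (f ` Q)" by (auto simp: g_def)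
    have "g a = w" "\<And>x. x \<in> Q - {a} \<Longrightarrow> g x = f x" "g a' = f a" using a by (auto simp: g_def)
    then show "insert w (f ` Q) \<subseteq> g ` Q" using a by (auto intro: image_eqI) (metis DiffI image_eqI singletonD)
  qed
  then have "card (f ` Q) < card (g ` Q)" using w fin by simp
  moreover have "f = compose Q (restrict (\<lambda>x. if x = w then f a else x) Q) g"
    using f w a by (auto simp: fun_eq_iff compose_def g_def PiE_def extensional_def)
  moreover have "g \<in> Q \<rightarrow>\<^sub>E Q" "g z = z" using f fz w a z by (auto simp: g_def)
  moreover have "f a \<in> Q" "w \<noteq> f a" using f a w by auto
  ultimately show thesis using that w \<open>w \<noteq> z\<close> a by blast
qed

locale fix_or_const_generators =
  fixes Q :: "'a set" and z :: 'a and us :: "'a list"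
  assumes distinct_us: "distinct us" and set_us: "set us = Q - {z}" and z_in_Q: "z \<in> Q"
    and length_us: "3 \<le> length us"
begin

definition gen_cycle :: "'a \<Rightarrow> 'a" where "gen_cycle = restrict (cycle_of_list us) Q"
definition gen_swap :: "'a \<Rightarrow> 'a" where "gen_swap = restrict (transpose (us ! 0) (us ! 1)) Q"
definition gen_merge :: "'a \<Rightarrow> 'a" where "gen_merge = restrict (\<lambda>x. if x = us ! 0 then us ! 1 else x) Q"
definition gen_reset :: "'a \<Rightarrow> 'a" where "gen_reset = restrict (\<lambda>x. if x = us ! 0 then z else x) Q"
definition gen_const :: "'a \<Rightarrow> 'a" where "gen_const = restrict (\<lambda>_. us ! 0) Q"

definition generators :: "('a \<Rightarrow> 'a) set" where
  "generators = {gen_cycle, gen_swap, gen_merge, gen_reset, gen_const}"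

abbreviation S :: "('a \<Rightarrow> 'a) set" where "S \<equiv> sg_gen Q generators"

definition S_perms :: "('a \<Rightarrow> 'a) set" where
  "S_perms = {p. p permutes (Q - {z}) \<and> restrict p Q \<in> S}"

lemma nth_us: "i < length us \<Longrightarrow> us ! i \<in> Q - {z}"
  using set_us nth_mem by blast

lemma nth_us_eq_iff: "i < length us \<Longrightarrow> j < length us \<Longrightarrow> us ! i = us ! j \<longleftrightarrow> i = j"
  using distinct_us by (simp add: nth_eq_iff_index_eq)

lemma first_three_us:
  shows "us ! 0 \<in> Q - {z}" "us ! 1 \<in> Q - {z}" "us ! 2 \<in> Q - {z}"
    and "us ! 0 \<noteq> us ! 1" "us ! 1 \<noteq> us ! 2" "us ! 0 \<noteq> us ! 2"
proof -
  have i: "0 < length us" "1 < length us" "2 < length us" using length_us by auto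
  show "us ! 0 \<in> Q - {z}" "us ! 1 \<in> Q - {z}" "us ! 2 \<in> Q - {z}"
    using nth_us[OF i(1)] nth_us[OF i(2)] nth_us[OF i(3)] .
  show "us ! 0 \<noteq> us ! 1" "us ! 1 \<noteq> us ! 2" "us ! 0 \<noteq> us ! 2"
    using nth_us_eq_iff[OF i(1,2)] nth_us_eq_iff[OF i(2,3)] nth_us_eq_iff[OF i(1,3)] by simp_all
qed

lemma finite_Q: "finite Q"
  using set_us z_in_Q by (metis List.finite_set finite_Diff2 finite.emptyI finite.insertI)

lemma permutes_funcset:
  assumes "p permutes (Q - {z})"
  shows "p \<in> Q \<rightarrow> Q"
proof
  fix x assume "x \<in> Q"
  then show "p x \<in> Q"
    using permutes_in_image[OF assms, of x] permutes_not_in[OF assms, of x] z_in_Q by (cases "x = z") auto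
qed

lemma generators_subset: "generators \<subseteq> fix_or_const Q z"
proof -
  note u = first_three_us(1,2)
  have c: "cycle_of_list us permutes (Q - {z})" using cycle_permutes[of us] set_us by simp
  have "gen_cycle \<in> fix_or_const Q z"
    unfolding gen_cycle_def using permutes_funcset[OF c] permutes_not_in[OF c] z_in_Q
    by (intro fix_or_const_fixing) auto
  moreover have "gen_swap \<in> fix_or_const Q z"
    unfolding gen_swap_def using u z_in_Q by (intro fix_or_const_fixing) (auto simp: transpose_def)
  moreover have "gen_merge \<in> fix_or_const Q z" "gen_reset \<in> fix_or_const Q z"
    unfolding gen_merge_def gen_reset_def using u z_in_Q by (auto intro!: fix_or_const_fixing)
  moreover have "gen_const \<in> fix_or_const Q z"
    unfolding gen_const_def using u(1) by (rule fix_or_const_constI)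
  ultimately show ?thesis by (simp add: generators_def)
qed

lemma S_funcset: "f \<in> S \<Longrightarrow> f \<in> Q \<rightarrow> Q"
  using sg_gen_funcset[of generators Q] generators_subset fix_or_const_funcset[OF z_in_Q] by blast

lemma S_perms_comp: "p \<in> S_perms \<Longrightarrow> q \<in> S_perms \<Longrightarrow> p \<circ> q \<in> S_perms"
  by (auto simp: S_perms_def permutes_compose restrict_comp_eq_compose permutes_funcset intro: sg_gen.step)

lemma S_perms_funpow_Suc: "p \<in> S_perms \<Longrightarrow> p ^^ Suc k \<in> S_perms"
  by (induction k) (auto intro: S_perms_comp)

lemma S_perms_inv:
  assumes p: "p \<in> S_perms"
  shows "inv p \<in> S_perms"
proof -
  have "p permutes (Q - {z})" using p by (simp add: S_perms_def)
  then have "permutation p" using set_us by (metis List.finite_set permutation_permutes)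
  then obtain n where "p ^^ n = id" "0 < n" by (rule permutation_is_nilpotent)
  then obtain m where m: "p ^^ Suc m = id" by (cases n) auto
  then have "p \<circ> p ^^ m = id" "p ^^ m \<circ> p = id"
    by (simp_all only: funpow.simps(2) flip: funpow_Suc_right)
  then have inv: "inv p = p ^^ m" by (rule inv_unique_comp)
  show ?thesis
  proof (cases m)
    case 0
    then show ?thesis using inv m p by simp
  next
    case (Suc k)
    then show ?thesis using inv S_perms_funpow_Suc[OF p] by simp
  qed
qed

lemma S_conj:
  assumes p: "p \<in> S_perms" and f: "f \<in> S"
  shows "restrict (p \<circ> f \<circ> inv p) Q \<in> S"
proof -
  have "inv p permutes (Q - {z})" using p by (simp add: S_perms_def permutes_inv)
  then have inv: "inv p \<in> Q \<rightarrow> Q" by (rule permutes_funcset)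
  have "restrict (p \<circ> f \<circ> inv p) Q = compose Q (restrict p Q) (compose Q f (restrict (inv p) Q))"
    using inv S_funcset[OF f] by (auto simp: fun_eq_iff compose_def)
  also have "\<dots> \<in> S" using p f S_perms_inv[OF p] by (auto simp: S_perms_def intro: sg_gen.step)
  finally show ?thesis .
qed

lemma S_perms_transpose_conj:
  assumes p: "p \<in> S_perms" and t: "transpose a b \<in> S_perms" and "a \<in> Q - {z}" "b \<in> Q - {z}"
  shows "transpose (p a) (p b) \<in> S_perms"
proof -
  have perm: "p permutes (Q - {z})" using p by (simp add: S_perms_def)
  have "inv p \<in> Q \<rightarrow> Q" using perm by (intro permutes_funcset permutes_inv)
  then have "restrict (p \<circ> restrict (transpose a b) Q \<circ> inv p) Q = restrict (transpose (p a) (p b)) Q"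
    using transpose_conj[OF permutes_bij[OF perm]] by (auto simp: fun_eq_iff)
  moreover have "restrict (p \<circ> restrict (transpose a b) Q \<circ> inv p) Q \<in> S"
    using t by (intro S_conj p) (simp add: S_perms_def)
  moreover have "p a \<in> Q - {z}" "p b \<in> Q - {z}"
    using assms(3,4) permutes_in_image[OF perm] by blast+
  then have "transpose (p a) (p b) permutes (Q - {z})" by (rule permutes_swap_id)
  ultimately show ?thesis by (simp add: S_perms_def)
qed

lemma cycle_in_S_perms: "cycle_of_list us \<in> S_perms"
  using cycle_permutes[of us] set_us by (auto simp: S_perms_def generators_def gen_cycle_def intro: sg_gen.base)

lemma swap_in_S_perms: "transpose (us ! 0) (us ! 1) \<in> S_perms"
  using first_three_us(1,2)
  by (auto simp: S_perms_def generators_def gen_swap_def intro: sg_gen.base permutes_swap_id)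

lemma id_in_S_perms: "id \<in> S_perms"
  using S_perms_comp[OF cycle_in_S_perms S_perms_inv[OF cycle_in_S_perms]] cycle_permutes[of us]
  by (simp add: permutes_inv_o)

lemma S_perms_funpow: "p \<in> S_perms \<Longrightarrow> p ^^ k \<in> S_perms"
  using S_perms_funpow_Suc id_in_S_perms by (cases k) auto

lemma cycle_funpow_nth:
  assumes "i < length us"
  shows "(cycle_of_list us ^^ k) (us ! i) = us ! ((k + i) mod length us)"
  using arg_cong[OF cyclic_rotation[OF distinct_us, of k], of "\<lambda>xs. xs ! i"] assms
  by (simp add: nth_rotate)

lemma adjacent_transpose_in_S_perms:
  assumes "Suc j < length us"
  shows "transpose (us ! j) (us ! Suc j) \<in> S_perms"
proof -
  have "transpose ((cycle_of_list us ^^ j) (us ! 0)) ((cycle_of_list us ^^ j) (us ! 1)) \<in> S_perms"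
    using length_us by (intro S_perms_transpose_conj[of "cycle_of_list us ^^ j" "us ! 0" "us ! 1"]
        S_perms_funpow cycle_in_S_perms swap_in_S_perms nth_us) auto
  moreover have "0 < length us" "1 < length us" using assms by auto
  ultimately show ?thesis using assms cycle_funpow_nth[of 0 j] cycle_funpow_nth[of 1 j] by simp
qed

lemma transpose_first_in_S_perms: "j < length us \<Longrightarrow> transpose (us ! 0) (us ! j) \<in> S_perms"
proof (induction j)
  case 0
  then show ?case using id_in_S_perms by (simp add: id_def)
next
  case (Suc j)
  show ?case
  proof (cases j)
    case 0
    then show ?thesis using swap_in_S_perms by simp
  next
    case (Suc i)
    let ?s = "transpose (us ! j) (us ! Suc j)"
    have j: "0 < length us" "j < length us" "Suc j < length us" using Suc.prems by auto
    have "us ! 0 \<noteq> us ! j" "us ! 0 \<noteq> us ! Suc j"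
      using nth_us_eq_iff[OF j(1,2)] nth_us_eq_iff[OF j(1,3)] \<open>j = Suc i\<close> by auto
    then have "?s (us ! 0) = us ! 0" "?s (us ! j) = us ! Suc j" by simp_all
    moreover have "transpose (?s (us ! 0)) (?s (us ! j)) \<in> S_perms"
      using j Suc.IH by (intro S_perms_transpose_conj[of ?s "us ! 0" "us ! j"]
          adjacent_transpose_in_S_perms nth_us) auto
    ultimately show ?thesis by simp
  qed
qed

lemma transpose_in_S_perms:
  assumes a: "a \<in> Q - {z}" and b: "b \<in> Q - {z}"
  shows "transpose a b \<in> S_perms"
proof -
  have star: "transpose (us ! 0) c \<in> S_perms" if "c \<in> Q - {z}" for c
    using that set_us transpose_first_in_S_perms by (metis in_set_conv_nth)
  note u0 = first_three_us(1)
  consider "a = us ! 0" | "b = us ! 0" | "a = b" | "a \<noteq> us ! 0" "b \<noteq> us ! 0" "a \<noteq> b" by blast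
  then show ?thesis
  proof cases
    case 4
    then have "transpose (transpose (us ! 0) a (us ! 0)) (transpose (us ! 0) a b) \<in> S_perms"
      using a b u0 by (intro S_perms_transpose_conj[of "transpose (us ! 0) a" "us ! 0" b] star) auto
    then show ?thesis using 4 by simp
  qed (use a b star id_in_S_perms in \<open>auto simp: transpose_commute id_def\<close>)
qed

lemma permutes_in_S_perms:
  assumes "p permutes (Q - {z})"
  shows "p \<in> S_perms"
  using assms List.finite_set[of us, unfolded set_us]
proof (induction rule: permutes_induct)
  case id
  then show ?case by (rule id_in_S_perms)
next
  case (swap a b p)
  then show ?case by (intro S_perms_comp transpose_in_S_perms)
qed

lemma restrict_point_update_conj:
  assumes p: "p permutes (Q - {z})" and "c \<in> Q" and "v \<in> Q"
  shows "restrict (p \<circ> restrict (\<lambda>x. if x = c then v else x) Q \<circ> inv p) Q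
    = restrict (\<lambda>x. if x = p c then p v else x) Q"
proof -
  have "inv p x \<in> Q" if "x \<in> Q" for x
    using permutes_funcset[OF permutes_inv[OF p]] that by auto
  moreover have "inv p x = c \<longleftrightarrow> x = p c" for x
    using permutes_inverses[OF p] by metis
  ultimately show ?thesis
    using permutes_inverses(1)[OF p] by (auto simp: fun_eq_iff)
qed

lemma point_update_in_S:
  assumes a: "a \<in> Q - {z}" and b: "b \<in> Q" and "a \<noteq> b"
  shows "restrict (\<lambda>x. if x = a then b else x) Q \<in> S"
proof -
  note u = first_three_us(1,2,4)
  obtain p v where p: "p permutes (Q - {z})" "p (us ! 0) = a" "p v = b"
    and v: "restrict (\<lambda>x. if x = us ! 0 then v else x) Q \<in> generators" "v \<in> Q"
  proof (cases "b = z")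
    case True
    have "transpose (us ! 0) a permutes (Q - {z})" using u a by (intro permutes_swap_id)
    moreover have "transpose (us ! 0) a z = z" using u a by auto
    ultimately show thesis
      using that[of "transpose (us ! 0) a" z] True z_in_Q by (simp add: generators_def gen_reset_def)
  next
    case False
    then obtain p where "p permutes (Q - {z})" "p (us ! 0) = a" "p (us ! 1) = b"
      using permutes_two_points[of "us ! 0" "Q - {z}" "us ! 1" a b] u a b \<open>a \<noteq> b\<close> by auto
    then show thesis
      using that[of p "us ! 1"] u by (simp add: generators_def gen_merge_def)
  qed
  have "restrict (p \<circ> restrict (\<lambda>x. if x = us ! 0 then v else x) Q \<circ> inv p) Q \<in> S"
    using v p permutes_in_S_perms by (blast intro: S_conj sg_gen.base)
  moreover have "restrict (p \<circ> restrict (\<lambda>x. if x = us ! 0 then v else x) Q \<circ> inv p) Q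
      = restrict (\<lambda>x. if x = a then b else x) Q"
    using restrict_point_update_conj[OF p(1) _ v(2), of "us ! 0"] u(1) unfolding p(2,3) by simp
  ultimately show ?thesis by simp
qed

lemma injective_fixing_in_S:
  assumes f: "f \<in> Q \<rightarrow>\<^sub>E Q" and "f z = z" and "inj_on f Q"
  shows "f \<in> S"
proof -
  define p where "p = (\<lambda>x. if x \<in> Q then f x else x)"
  have "f ` Q = Q"
    using assms finite_Q by (intro card_subset_eq) (auto simp: card_image)
  then have "f ` (Q - {z}) = Q - {z}"
    using assms z_in_Q by (simp add: inj_on_image_set_diff)
  then have "bij_betw p (Q - {z}) (Q - {z})"
    using assms by (auto simp: p_def bij_betw_def inj_on_def image_def)
  then have "p permutes (Q - {z})" by (rule bij_imp_permutes) (auto simp: p_def z_in_Q assms(2))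
  moreover have "restrict p Q = f" using f by (auto simp: p_def fun_eq_iff PiE_def extensional_def)
  ultimately show ?thesis using permutes_in_S_perms by (auto simp: S_perms_def)
qed

lemma fixing_in_S:
  assumes "f \<in> Q \<rightarrow>\<^sub>E Q" and "f z = z"
  shows "f \<in> S"
  using assms
proof (induction "card Q - card (f ` Q)" arbitrary: f rule: less_induct)
  case less
  show ?case
  proof (cases "inj_on f Q")
    case True
    then show ?thesis using injective_fixing_in_S less.prems by blast
  next
    case False
    then obtain g w a where g: "g \<in> Q \<rightarrow>\<^sub>E Q" "g z = z" "card (f ` Q) < card (g ` Q)"
      and w: "w \<in> Q - {z}" "a \<in> Q" "w \<noteq> f a"
      and f: "f = compose Q (restrict (\<lambda>x. if x = w then f a else x) Q) g"
      using fixing_map_decompose[OF finite_Q z_in_Q less.prems] by blast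
    have "card (g ` Q) \<le> card Q" using g(1) finite_Q by (intro card_mono) auto
    then have "g \<in> S" using less.hyps g by simp
    moreover have "restrict (\<lambda>x. if x = w then f a else x) Q \<in> S"
      using w less.prems(1) by (intro point_update_in_S) auto
    ultimately show ?thesis by (subst f) (rule sg_gen.step)
  qed
qed

lemma constant_in_S:
  assumes "c \<in> Q - {z}"
  shows "restrict (\<lambda>_. c) Q \<in> S"
proof -
  have "restrict (\<lambda>_. c) Q = compose Q (restrict (transpose (us ! 0) c) Q) gen_const"
    using first_three_us(1) by (auto simp: fun_eq_iff compose_def gen_const_def)
  also have "\<dots> \<in> S"
    using transpose_in_S_perms[OF first_three_us(1) assms]
    by (auto simp: S_perms_def generators_def intro: sg_gen.step sg_gen.base)
  finally show ?thesis .
qed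

lemma sg_gen_generators_eq: "sg_gen Q generators = fix_or_const Q z"
proof
  show "S \<subseteq> fix_or_const Q z" by (rule sg_gen_fix_or_const[OF z_in_Q generators_subset])
  show "fix_or_const Q z \<subseteq> S" by (auto simp: fix_or_const_def intro: fixing_in_S constant_in_S)
qed

lemma card_generators: "card generators = 5"
proof -
  note u = first_three_us
  have i: "0 < length us" "1 < length us" using length_us by auto
  have "cycle_of_list us (us ! 0) = us ! 1" "cycle_of_list us (us ! 1) = us ! 2"
    using cycle_funpow_nth[OF i(1), of 1] cycle_funpow_nth[OF i(2), of 1] length_us
    by (simp_all add: numeral_2_eq_2)
  moreover have "cycle_of_list us z = z" using id_outside_supp[of z us] set_us by simp
  ultimately have "gen_cycle (us ! 1) = us ! 2" "gen_swap (us ! 1) = us ! 0" "gen_merge (us ! 1) = us ! 1"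
    "gen_reset (us ! 0) = z" "gen_cycle (us ! 0) = us ! 1" "gen_swap (us ! 0) = us ! 1"
    "gen_merge (us ! 0) = us ! 1" "gen_const z = us ! 0" "gen_cycle z = z" "gen_swap z = z"
    "gen_merge z = z" "gen_reset z = z"
    using u z_in_Q
    by (auto simp: gen_cycle_def gen_swap_def gen_merge_def gen_reset_def gen_const_def transpose_def)
  then have "gen_cycle \<noteq> gen_swap" "gen_cycle \<noteq> gen_merge" "gen_swap \<noteq> gen_merge"
    "gen_reset \<noteq> gen_cycle" "gen_reset \<noteq> gen_swap" "gen_reset \<noteq> gen_merge"
    "gen_const \<noteq> gen_cycle" "gen_const \<noteq> gen_swap" "gen_const \<noteq> gen_merge" "gen_const \<noteq> gen_reset"
    using u by (metis DiffD2 singletonI)+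
  then show ?thesis by (simp add: generators_def)
qed

end


theorem sg_rank_fix_or_const:
  assumes fin: "finite Q" and z: "z \<in> Q" and card: "4 \<le> card Q"
  shows "sg_rank Q (fix_or_const Q z) = 5"
proof -
  obtain us where us: "distinct us" "set us = Q - {z}"
    using finite_distinct_list[of "Q - {z}"] fin by auto
  then have "length us = card Q - 1" using fin z by (metis card_Diff_singleton distinct_card)
  then have "3 \<le> length us" using card by simp
  then interpret fix_or_const_generators Q z us using us z by unfold_locales
  show ?thesis unfolding sg_rank_def
  proof (rule Least_equality)
    show "\<exists>G. G \<subseteq> fix_or_const Q z \<and> finite G \<and> card G = 5 \<and> sg_gen Q G = fix_or_const Q z"
      using generators_subset card_generators sg_gen_generators_eq
      by (intro exI[of _ generators]) (simp add: generators_def)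
  next
    fix k
    assume "\<exists>G. G \<subseteq> fix_or_const Q z \<and> finite G \<and> card G = k \<and> sg_gen Q G = fix_or_const Q z"
    then show "5 \<le> k" using card_generators_fix_or_const_ge[OF fin z card] by blast
  qed
qed

theorem proposition4:
  fixes n :: nat and Sig :: "'a set" and delta :: "nat \<Rightarrow> 'a \<Rightarrow> nat"
    and q0 :: nat and F :: "nat set"
  assumes "n \<ge> 4"
    and "minimal_dfa n Sig delta q0 F"
    and "left_ideal Sig (dfa_lang Sig delta q0 F)"
    and "card (trans_sg n Sig delta) = n ^ (n - 1) + n - 1"
  shows "sg_rank {..<n} (trans_sg n Sig delta) = 5"
proof -
  have "q0 < n" using assms(2) by (simp add: minimal_dfa_def dfa_def)
  moreover have "trans_sg n Sig delta = fix_or_const {..<n} q0"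
    by (rule trans_sg_eq_fix_or_const[OF assms])
  ultimately show ?thesis using sg_rank_fix_or_const[of "{..<n}" q0] assms(1) by simp
qed

end
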